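(* Consider the quantized estimation system described in the context. Let $D_{\mathbf{u}}=\prod_{j=1}^N\prod_{l=1}^{L_j}R_{jl}$, let $\mathbf{a}_1,\dots,\mathbf{a}_{D_{\mathbf{u}}}$ enumerate all possible realizations of $\mathbf{u}$, and define $\varphi_{\mathbf{u}}:\Theta\to\mathbb{R}^{D_{\mathbf{u}}}$ by $\varphi_{\mathbf{u}}(\theta)=[\Pr(\mathbf{a}_1\mid\theta),\dots,\Pr(\mathbf{a}_{D_{\mathbf{u}}}\mid\theta)]^T$. For each $j$ fix an enumeration $\mathbf{s}^{(j)}_1,\dots,\mathbf{s}^{(j)}_{|\mathcal{S}_j|}$ of $\mathcal{S}_j$, let $\psi_j(\theta)=[q_j^{(\mathbf{s}^{(j)}_1)}(\theta),\dots,q_j^{(\mathbf{s}^{(j)}_{|\mathcal{S}_j|-1})}(\theta)]^T$, and define $\Psi:\Theta\to\mathbb{R}^{\sum_{j=1}^N\prod_{l=1}^{L_j}R_{jl}-N}$ by $\Psi(\theta)=[\psi_1(\theta)^T,\dots,\psi_N(\theta)^T]^T$. Then $\varphi_{\mathbf{u}}$ is injective if and only if $\Psi$ is injective. Consequently, the parameter space $\Theta$ is identifiable if and only if $\Psi$ is injective. Moreover, for any $N\ge1$ and any integers $R_{jl}\ge1$, the dimension of $\Psi(\theta)$ is strictly smaller than that of $\varphi_{\mathbf{u}}(\theta)$, i.e. $\sum_{j=1}^N\prod_{l=1}^{L_j}R_{jl}-N<\prod_{j=1}^N\prod_{l=1}^{L_j}R_{jl}$.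
   Context: Setting: $\Theta\subset\mathbb{R}^{D_\theta}$ is a parameter set. There are $N\ge 1$ sensors. Sensor $j$ observes a random vector $\mathbf{x}_j$ with law $\mathscr{P}_j^\theta$ on a measurable space $(\mathscr{X}_j,\mathscr{F}_j)$, indexed by $\theta\in\Theta$; $\mathbf{x}_1,\dots,\mathbf{x}_N$ are independent. Each $\mathbf{x}_j$ is partitioned into $L_j\ge1$ disjoint subvectors $\mathbf{x}_j=[\mathbf{x}_{j1}^T,\dots,\mathbf{x}_{jL_j}^T]^T$. For each $j,l$, $\gamma_{jl}$ is an $R_{jl}$-level vector quantizer: there are disjoint regions $I_{jl}^{(1)},\dots,I_{jl}^{(R_{jl})}$ covering its domain and $\gamma_{jl}(\mathbf{x}_{jl})=r$ iff $\mathbf{x}_{jl}\in I_{jl}^{(r)}$. The (measurable) superquantizer is $\Gamma_j(\mathbf{x}_j)=[\gamma_{j1}(\mathbf{x}_{j1}),\dots,\gamma_{jL_j}(\mathbf{x}_{jL_j})]^T$, $\mathbf{u}_j=\Gamma_j(\mathbf{x}_j)$, $\mathbf{u}=[\mathbf{u}_1^T,\dots,\mathbf{u}_N^T]^T$. $\mathcal{S}_j$ is the set of all possible outcomes of $\Gamma_j$ ($|\mathcal{S}_j|=\prod_l R_{jl}$), $q_j^{(\mathbf{s})}(\theta)=\mathscr{P}_j^\theta(\Gamma_j(\mathbf{x}_j)=\mathbf{s})$, and $\Pr(\mathbf{u}\mid\theta)=\prod_{j=1}^N q_j^{(\mathbf{u}_j)}(\theta)$. Two distinct points $\theta,\theta'\in\Theta$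 are observationally equivalent if $\Pr(\mathbf{u}\mid\theta)=\Pr(\mathbf{u}\mid\theta')$ for all possible $\mathbf{u}$. A point $\theta\in\Theta$ is identifiable if no $\theta'\in\Theta\setminus\{\theta\}$ is observationally equivalent to it. The parameter space $\Theta$ is identifiable if every $\theta\in\Theta$ is identifiable. *)

theory Defs
  imports "HOL-Probability.Probability"
begin

text \<open>Sensors are indexed by j < N; sensor j has L j subvectors, indexed by l < L j.
  sub j l x extracts the l-th subvector of the observation x of sensor j;
  gam j l is the R j l-level quantizer with levels 1..R j l
  (region r of the quantizer is the set of points mapped to r).
  P j theta is the law of the observation of sensor j under theta.\<close>

definition Gamma ::
  "(nat \<Rightarrow> nat) \<Rightarrow> (nat \<Rightarrow> nat \<Rightarrow> 'y \<Rightarrow> nat) \<Rightarrow> (nat \<Rightarrow> nat \<Rightarrow> 'x \<Rightarrow> 'y)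
    \<Rightarrow> nat \<Rightarrow> 'x \<Rightarrow> (nat \<Rightarrow> nat)" where
  "Gamma L gam sub j x = restrict (\<lambda>l. gam j l (sub j l x)) {..<L j}"

definition outcomes :: "(nat \<Rightarrow> nat) \<Rightarrow> (nat \<Rightarrow> nat \<Rightarrow> nat) \<Rightarrow> nat \<Rightarrow> (nat \<Rightarrow> nat) set" where
  "outcomes L R j = PiE {..<L j} (\<lambda>l. {1..R j l})"

definition realizations ::
  "nat \<Rightarrow> (nat \<Rightarrow> nat) \<Rightarrow> (nat \<Rightarrow> nat \<Rightarrow> nat) \<Rightarrow> (nat \<Rightarrow> nat \<Rightarrow> nat) set" where
  "realizations N L R = PiE {..<N} (outcomes L R)"

definition qprob ::
  "(nat \<Rightarrow> 'p \<Rightarrow> 'x measure) \<Rightarrow> (nat \<Rightarrow> nat) \<Rightarrow> (nat \<Rightarrow> nat \<Rightarrow> 'y \<Rightarrow> nat)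
    \<Rightarrow> (nat \<Rightarrow> nat \<Rightarrow> 'x \<Rightarrow> 'y) \<Rightarrow> nat \<Rightarrow> (nat \<Rightarrow> nat) \<Rightarrow> 'p \<Rightarrow> real" where
  "qprob P L gam sub j s theta =
     measure (P j theta) {x \<in> space (P j theta). Gamma L gam sub j x = s}"

definition Pr_u ::
  "(nat \<Rightarrow> 'p \<Rightarrow> 'x measure) \<Rightarrow> nat \<Rightarrow> (nat \<Rightarrow> nat) \<Rightarrow> (nat \<Rightarrow> nat \<Rightarrow> 'y \<Rightarrow> nat)
    \<Rightarrow> (nat \<Rightarrow> nat \<Rightarrow> 'x \<Rightarrow> 'y) \<Rightarrow> (nat \<Rightarrow> nat \<Rightarrow> nat) \<Rightarrow> 'p \<Rightarrow> real" where
  "Pr_u P N L gam sub u theta = (\<Prod>j<N. qprob P L gam sub j (u j) theta)"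

definition obs_equiv ::
  "(nat \<Rightarrow> 'p \<Rightarrow> 'x measure) \<Rightarrow> nat \<Rightarrow> (nat \<Rightarrow> nat) \<Rightarrow> (nat \<Rightarrow> nat \<Rightarrow> nat)
    \<Rightarrow> (nat \<Rightarrow> nat \<Rightarrow> 'y \<Rightarrow> nat) \<Rightarrow> (nat \<Rightarrow> nat \<Rightarrow> 'x \<Rightarrow> 'y) \<Rightarrow> 'p \<Rightarrow> 'p \<Rightarrow> bool" where
  "obs_equiv P N L R gam sub theta theta' \<longleftrightarrow>
     theta \<noteq> theta' \<and>
     (\<forall>u \<in> realizations N L R. Pr_u P N L gam sub u theta = Pr_u P N L gam sub u theta')"

definition identifiable_point ::
  "'p set \<Rightarrow> (nat \<Rightarrow> 'p \<Rightarrow> 'x measure) \<Rightarrow> nat \<Rightarrow> (nat \<Rightarrow> nat) \<Rightarrow> (nat \<Rightarrow> nat \<Rightarrow> nat)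
    \<Rightarrow> (nat \<Rightarrow> nat \<Rightarrow> 'y \<Rightarrow> nat) \<Rightarrow> (nat \<Rightarrow> nat \<Rightarrow> 'x \<Rightarrow> 'y) \<Rightarrow> 'p \<Rightarrow> bool" where
  "identifiable_point Theta P N L R gam sub theta \<longleftrightarrow>
     (\<forall>theta' \<in> Theta - {theta}. \<not> obs_equiv P N L R gam sub theta theta')"

definition identifiable_space ::
  "'p set \<Rightarrow> (nat \<Rightarrow> 'p \<Rightarrow> 'x measure) \<Rightarrow> nat \<Rightarrow> (nat \<Rightarrow> nat) \<Rightarrow> (nat \<Rightarrow> nat \<Rightarrow> nat)
    \<Rightarrow> (nat \<Rightarrow> nat \<Rightarrow> 'y \<Rightarrow> nat) \<Rightarrow> (nat \<Rightarrow> nat \<Rightarrow> 'x \<Rightarrow> 'y) \<Rightarrow> bool" where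
  "identifiable_space Theta P N L R gam sub \<longleftrightarrow>
     (\<forall>theta \<in> Theta. identifiable_point Theta P N L R gam sub theta)"

text \<open>varphi_u(theta) = [Pr(a_1|theta), ..., Pr(a_D|theta)], as a list of length D,
  where a enumerates the realizations (a i is the (i+1)-th one).\<close>
definition phi_u ::
  "(nat \<Rightarrow> 'p \<Rightarrow> 'x measure) \<Rightarrow> nat \<Rightarrow> (nat \<Rightarrow> nat) \<Rightarrow> (nat \<Rightarrow> nat \<Rightarrow> 'y \<Rightarrow> nat)
    \<Rightarrow> (nat \<Rightarrow> nat \<Rightarrow> 'x \<Rightarrow> 'y) \<Rightarrow> (nat \<Rightarrow> nat \<Rightarrow> nat \<Rightarrow> nat) \<Rightarrow> nat \<Rightarrow> 'p \<Rightarrow> real list" where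
  "phi_u P N L gam sub a D theta = map (\<lambda>i. Pr_u P N L gam sub (a i) theta) [0..<D]"

definition Psi ::
  "(nat \<Rightarrow> 'p \<Rightarrow> 'x measure) \<Rightarrow> nat \<Rightarrow> (nat \<Rightarrow> nat) \<Rightarrow> (nat \<Rightarrow> nat \<Rightarrow> nat)
    \<Rightarrow> (nat \<Rightarrow> nat \<Rightarrow> 'y \<Rightarrow> nat) \<Rightarrow> (nat \<Rightarrow> nat \<Rightarrow> 'x \<Rightarrow> 'y)
    \<Rightarrow> (nat \<Rightarrow> nat \<Rightarrow> nat \<Rightarrow> nat) \<Rightarrow> 'p \<Rightarrow> real list" where
  "Psi P N L R gam sub es theta =
     concat (map (\<lambda>j. map (\<lambda>i. qprob P L gam sub j (es j i) theta)
                          [0..<card (outcomes L R j) - 1]) [0..<N])"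

end

theory Submission
  imports Defs
begin

text \<open>A realization u of the quantized data carries the same information as the family of the
  marginal laws q_j, because Pr(u | theta) is the product of these marginals and each marginal is
  recovered from the products by summing out the other sensors. Since each q_j sums to one over
  S_j, its last entry is determined by the others, so Psi already determines all q_j.\<close>

lemma sum_PiE_prod_marginal:
  fixes p :: "'i \<Rightarrow> 'a \<Rightarrow> 'b :: comm_semiring_1"
  assumes "finite I" and "\<And>i. i \<in> I \<Longrightarrow> finite (S i)" and "j \<in> I" and "s \<in> S j"
    and sum_one: "\<And>i. i \<in> I \<Longrightarrow> (\<Sum>t\<in>S i. p i t) = 1"
  shows "(\<Sum>u\<in>PiE I S. if u j = s then (\<Prod>i\<in>I. p i (u i)) else 0) = p j s"
proof -
  \<comment> \<open>Kill every entry of the j-th factor except s and expand the product of sums.\<close>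
  define p' where "p' i t = (if i = j then (if t = s then p i t else 0) else p i t)" for i t
  have "(\<Sum>u\<in>PiE I S. \<Prod>i\<in>I. p' i (u i)) = (\<Prod>i\<in>I. \<Sum>t\<in>S i. p' i t)"
    by (rule prod_sum_PiE[symmetric]) (use assms in auto)
  also have "\<dots> = (\<Sum>t\<in>S j. p' j t) * (\<Prod>i\<in>I - {j}. \<Sum>t\<in>S i. p' i t)"
    using assms by (simp add: prod.remove)
  also have "(\<Sum>t\<in>S j. p' j t) = p j s"
    using assms by (simp add: p'_def)
  also have "(\<Prod>i\<in>I - {j}. \<Sum>t\<in>S i. p' i t) = 1"
    by (rule prod.neutral) (auto simp: p'_def sum_one)
  moreover have "(\<Prod>i\<in>I. p' i (u i)) = (if u j = s then (\<Prod>i\<in>I. p i (u i)) else 0)" for u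
    using assms by (auto simp: p'_def intro!: prod.cong prod_zero bexI[of _ j])
  ultimately show ?thesis by simp
qed

lemma prod_PiE_eq_iff:
  fixes p q :: "'i \<Rightarrow> 'a \<Rightarrow> 'b :: comm_semiring_1"
  assumes "finite I" and "\<And>i. i \<in> I \<Longrightarrow> finite (S i)"
    and "\<And>i. i \<in> I \<Longrightarrow> (\<Sum>t\<in>S i. p i t) = 1" and "\<And>i. i \<in> I \<Longrightarrow> (\<Sum>t\<in>S i. q i t) = 1"
  shows "(\<forall>u\<in>PiE I S. (\<Prod>i\<in>I. p i (u i)) = (\<Prod>i\<in>I. q i (u i)))
    \<longleftrightarrow> (\<forall>i\<in>I. \<forall>s\<in>S i. p i s = q i s)"
proof
  assume prod_eq: "\<forall>u\<in>PiE I S. (\<Prod>i\<in>I. p i (u i)) = (\<Prod>i\<in>I. q i (u i))"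
  show "\<forall>i\<in>I. \<forall>s\<in>S i. p i s = q i s"
  proof (intro ballI)
    fix j s assume "j \<in> I" "s \<in> S j"
    then have "p j s = (\<Sum>u\<in>PiE I S. if u j = s then (\<Prod>i\<in>I. p i (u i)) else 0)"
      using assms by (simp add: sum_PiE_prod_marginal)
    also have "\<dots> = (\<Sum>u\<in>PiE I S. if u j = s then (\<Prod>i\<in>I. q i (u i)) else 0)"
      using prod_eq by (intro sum.cong) auto
    also have "\<dots> = q j s"
      using assms \<open>j \<in> I\<close> \<open>s \<in> S j\<close> by (simp add: sum_PiE_prod_marginal)
    finally show "p j s = q j s" .
  qed
qed (auto simp: PiE_iff intro!: prod.cong)

lemma eq_on_if_sum_eq_and_eq_but_last:
  fixes p q :: "'a \<Rightarrow> 'b :: cancel_comm_monoid_add" and n :: nat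
  assumes e: "bij_betw e {..<n} S" and "(\<Sum>s\<in>S. p s) = (\<Sum>s\<in>S. q s)"
    and init: "\<forall>i<n - 1. p (e i) = q (e i)"
  shows "\<forall>s\<in>S. p s = q s"
proof (cases n)
  case (Suc m)
  have split: "(\<Sum>s\<in>S. f s) = (\<Sum>i<m. f (e i)) + f (e m)" for f :: "'a \<Rightarrow> 'b"
    using sum.reindex_bij_betw[OF e, of f] Suc by simp
  have "(\<Sum>i<m. p (e i)) = (\<Sum>i<m. q (e i))"
    using init Suc by (intro sum.cong) auto
  then have "p (e m) = q (e m)"
    using split[of p] split[of q] assms(2) by simp
  with init Suc have "\<forall>i<n. p (e i) = q (e i)"
    by (auto simp: less_Suc_eq)
  with e show ?thesis
    by (auto simp: bij_betw_def)
qed (use e in \<open>simp add: bij_betw_def\<close>)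

lemma concat_map_eq_iff:
  assumes "\<And>x. x \<in> set xs \<Longrightarrow> length (f x) = length (g x)"
  shows "concat (map f xs) = concat (map g xs) \<longleftrightarrow> (\<forall>x\<in>set xs. f x = g x)"
  using assms by (induction xs) auto

lemma sum_diff_one_less_prod:
  fixes c :: "'a \<Rightarrow> nat"
  assumes "finite A" and "\<And>j. j \<in> A \<Longrightarrow> c j \<ge> 1"
  shows "(\<Sum>j\<in>A. c j - 1) < (\<Prod>j\<in>A. c j)"
  using assms
proof (induction A rule: finite_induct)
  case (insert k A)
  then have IH: "(\<Sum>j\<in>A. c j - 1) + 1 \<le> (\<Prod>j\<in>A. c j)" and "c k \<ge> 1"
    by auto
  then have "(\<Sum>j\<in>A. c j - 1) + c k \<le> c k * ((\<Sum>j\<in>A. c j - 1) + 1)"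
    by (simp add: algebra_simps)
  also have "\<dots> \<le> c k * (\<Prod>j\<in>A. c j)"
    using IH by (rule mult_le_mono2)
  finally show ?case
    using insert.hyps \<open>c k \<ge> 1\<close> by simp
qed simp

lemma (in prob_space) sum_prob_fibres:
  assumes "f \<in> measurable M (count_space UNIV)" and "finite S"
    and "\<And>x. x \<in> space M \<Longrightarrow> f x \<in> S"
  shows "(\<Sum>s\<in>S. prob {x \<in> space M. f x = s}) = 1"
proof -
  have "{x \<in> space M. f x = s} \<in> events" for s
    using measurable_sets[OF assms(1), of "{s}"] by (simp add: vimage_def Int_def conj_commute)
  then have "(\<Sum>s\<in>S. prob {x \<in> space M. f x = s}) = prob (\<Union>s\<in>S. {x \<in> space M. f x = s})"
    using assms(2) by (intro finite_measure_finite_Union[symmetric]) (auto simp: disjoint_family_on_def)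
  also have "(\<Union>s\<in>S. {x \<in> space M. f x = s}) = space M"
    using assms(3) by auto
  finally show ?thesis
    by (simp add: prob_space)
qed

lemma finite_outcomes: "finite (outcomes L R j)"
  by (simp add: outcomes_def finite_PiE)

lemma card_outcomes: "card (outcomes L R j) = (\<Prod>l<L j. R j l)"
  by (simp add: outcomes_def card_PiE)

lemma Gamma_in_outcomes:
  assumes "\<forall>l<L j. \<forall>y. gam j l y \<in> {1..R j l}"
  shows "Gamma L gam sub j x \<in> outcomes L R j"
  using assms by (auto simp: Gamma_def outcomes_def)

lemma sum_qprob_outcomes:
  assumes "prob_space (P j theta)" and "\<forall>l<L j. \<forall>y. gam j l y \<in> {1..R j l}"
    and "Gamma L gam sub j \<in> measurable (P j theta) (count_space UNIV)"
  shows "(\<Sum>s\<in>outcomes L R j. qprob P L gam sub j s theta) = 1"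
  unfolding qprob_def
  by (rule prob_space.sum_prob_fibres[OF assms(1,3) finite_outcomes])
    (rule Gamma_in_outcomes[where L = L and j = j and gam = gam and R = R, OF assms(2)])

lemma Pr_u_eq_iff_qprob_eq:
  assumes "\<forall>j<N. (\<Sum>s\<in>outcomes L R j. qprob P L gam sub j s theta) = 1"
    and "\<forall>j<N. (\<Sum>s\<in>outcomes L R j. qprob P L gam sub j s theta') = 1"
  shows "(\<forall>u\<in>realizations N L R. Pr_u P N L gam sub u theta = Pr_u P N L gam sub u theta')
    \<longleftrightarrow> (\<forall>j<N. \<forall>s\<in>outcomes L R j. qprob P L gam sub j s theta = qprob P L gam sub j s theta')"
  unfolding realizations_def Pr_u_def
  using prod_PiE_eq_iff[of "{..<N}" "outcomes L R" "\<lambda>j s. qprob P L gam sub j s theta"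
      "\<lambda>j s. qprob P L gam sub j s theta'"] assms finite_outcomes
  by auto

lemma phi_u_eq_iff:
  assumes "bij_betw a {..<D} (realizations N L R)"
  shows "phi_u P N L gam sub a D theta = phi_u P N L gam sub a D theta'
    \<longleftrightarrow> (\<forall>u\<in>realizations N L R. Pr_u P N L gam sub u theta = Pr_u P N L gam sub u theta')"
proof -
  have "realizations N L R = a ` {..<D}"
    using assms by (simp add: bij_betw_def)
  then show ?thesis
    by (simp add: phi_u_def atLeast0LessThan)
qed

lemma identifiable_space_iff_inj_on_phi_u:
  assumes "bij_betw a {..<D} (realizations N L R)"
  shows "identifiable_space Theta P N L R gam sub \<longleftrightarrow> inj_on (phi_u P N L gam sub a D) Theta"
  unfolding identifiable_space_def identifiable_point_def obs_equiv_def inj_on_def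
    phi_u_eq_iff[OF assms] by blast

lemma Psi_eq_iff:
  assumes enum: "\<forall>j<N. bij_betw (es j) {..<card (outcomes L R j)} (outcomes L R j)"
    and "\<forall>j<N. (\<Sum>s\<in>outcomes L R j. qprob P L gam sub j s theta) = 1"
    and "\<forall>j<N. (\<Sum>s\<in>outcomes L R j. qprob P L gam sub j s theta') = 1"
  shows "Psi P N L R gam sub es theta = Psi P N L R gam sub es theta'
    \<longleftrightarrow> (\<forall>j<N. \<forall>s\<in>outcomes L R j. qprob P L gam sub j s theta = qprob P L gam sub j s theta')"
    (is "_ \<longleftrightarrow> (\<forall>j<N. ?q_eq j)")
proof -
  have "Psi P N L R gam sub es theta = Psi P N L R gam sub es theta'
      \<longleftrightarrow> (\<forall>j<N. \<forall>i<card (outcomes L R j) - 1.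
            qprob P L gam sub j (es j i) theta = qprob P L gam sub j (es j i) theta')"
    unfolding Psi_def by (subst concat_map_eq_iff) auto
  also have "\<dots> \<longleftrightarrow> (\<forall>j<N. ?q_eq j)"
  proof (intro all_cong1 imp_cong refl iffI)
    fix j assume "j < N"
    then show "?q_eq j" if "\<forall>i<card (outcomes L R j) - 1.
        qprob P L gam sub j (es j i) theta = qprob P L gam sub j (es j i) theta'"
      using eq_on_if_sum_eq_and_eq_but_last[OF enum[rule_format], OF _ _ that] assms(2,3)
      by simp
    show "\<forall>i<card (outcomes L R j) - 1.
        qprob P L gam sub j (es j i) theta = qprob P L gam sub j (es j i) theta'" if "?q_eq j"
      using that bij_betwE[OF enum[rule_format, OF \<open>j < N\<close>]] by simp
  qed
  finally show ?thesis .
qed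

lemma length_phi_u: "length (phi_u P N L gam sub a D theta) = D"
  by (simp add: phi_u_def)

lemma length_Psi: "length (Psi P N L R gam sub es theta) = (\<Sum>j<N. card (outcomes L R j) - 1)"
  by (simp add: Psi_def length_concat sum_list_sum_nth atLeast0LessThan)

theorem lemma1:
  fixes Theta :: "(real ^ 'd) set"
    and N :: nat and L :: "nat \<Rightarrow> nat" and R :: "nat \<Rightarrow> nat \<Rightarrow> nat"
    and P :: "nat \<Rightarrow> real ^ 'd \<Rightarrow> 'x measure"
    and sub :: "nat \<Rightarrow> nat \<Rightarrow> 'x \<Rightarrow> 'y"
    and gam :: "nat \<Rightarrow> nat \<Rightarrow> 'y \<Rightarrow> nat"
    and a :: "nat \<Rightarrow> nat \<Rightarrow> nat \<Rightarrow> nat"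
    and es :: "nat \<Rightarrow> nat \<Rightarrow> nat \<Rightarrow> nat"
    and D :: nat
  assumes N_pos: "N \<ge> 1"
    and L_pos: "\<forall>j<N. L j \<ge> 1"
    and R_pos: "\<forall>j<N. \<forall>l<L j. R j l \<ge> 1"
    and prob: "\<forall>j<N. \<forall>theta\<in>Theta. prob_space (P j theta)"
    and quant: "\<forall>j<N. \<forall>l<L j. \<forall>y. gam j l y \<in> {1..R j l}"
    and meas: "\<forall>j<N. \<forall>theta\<in>Theta.
                 Gamma L gam sub j \<in> measurable (P j theta) (count_space UNIV)"
    and D_def: "D = (\<Prod>j<N. \<Prod>l<L j. R j l)"
    and enum_u: "bij_betw a {..<D} (realizations N L R)"
    and enum_S: "\<forall>j<N. bij_betw (es j) {..<card (outcomes L R j)} (outcomes L R j)"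
  shows "(inj_on (phi_u P N L gam sub a D) Theta \<longleftrightarrow> inj_on (Psi P N L R gam sub es) Theta)
       \<and> (identifiable_space Theta P N L R gam sub \<longleftrightarrow> inj_on (Psi P N L R gam sub es) Theta)
       \<and> (\<forall>theta\<in>Theta. length (Psi P N L R gam sub es theta) < length (phi_u P N L gam sub a D theta))
       \<and> (\<Sum>j<N. \<Prod>l<L j. R j l) - N < (\<Prod>j<N. \<Prod>l<L j. R j l)"
proof -
  have sum_one: "\<forall>j<N. (\<Sum>s\<in>outcomes L R j. qprob P L gam sub j s theta) = 1"
    if "theta \<in> Theta" for theta
    using prob quant meas that by (blast intro: sum_qprob_outcomes)
  have phi_eq_iff_Psi_eq: "phi_u P N L gam sub a D theta = phi_u P N L gam sub a D theta'
      \<longleftrightarrow> Psi P N L R gam sub es theta = Psi P N L R gam sub es theta'"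
    if "theta \<in> Theta" "theta' \<in> Theta" for theta theta'
    by (simp add: phi_u_eq_iff[OF enum_u] Pr_u_eq_iff_qprob_eq Psi_eq_iff[OF enum_S] sum_one that)
  have card_pos: "card (outcomes L R j) \<ge> 1" if "j < N" for j
    unfolding card_outcomes using R_pos that by (intro prod_ge_1) auto
  have "inj_on (phi_u P N L gam sub a D) Theta \<longleftrightarrow> inj_on (Psi P N L R gam sub es) Theta"
    unfolding inj_on_def using phi_eq_iff_Psi_eq by blast
  moreover have "(\<Sum>j<N. card (outcomes L R j) - 1) < (\<Prod>j<N. card (outcomes L R j))"
    using card_pos by (intro sum_diff_one_less_prod) auto
  moreover have "(\<Sum>j<N. card (outcomes L R j) - 1) = (\<Sum>j<N. card (outcomes L R j)) - N"
    using card_pos by (subst sum_subtractf_nat) auto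
  ultimately show ?thesis
    by (simp add: identifiable_space_iff_inj_on_phi_u[OF enum_u] length_Psi length_phi_u D_def
        card_outcomes)
qed

end
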